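(* Let $\mathbb{K}\in\{\mathbb{R},\mathbb{C}\}$, $\star\in\{*,T\}$, $\epsilon_1,\epsilon_2\in\{1,-1\}$, and let $Q(\lambda)=\lambda^2M+\lambda D+K\in\mathbb{K}^{n\times n}[\lambda]$ satisfy $M^\star=\epsilon_1M$, $D^\star=\epsilon_2D$, $K^\star=\epsilon_1K$. Let $(\lambda_1,x_1)$ and $(\lambda_2,x_2)$ be eigenpairs of $Q(\lambda)$ (with $\lambda_i\in\mathbb{K}$, $x_i\in\mathbb{K}^n$). If $\lambda_2\neq\epsilon_1\epsilon_2\lambda_1^\star$, then $\lambda_2x_1^\star Mx_2+\epsilon_1\epsilon_2\lambda_1^\star x_1^\star Mx_2+x_1^\star Dx_2=0$.
   Context: For a matrix or vector $A$, $A^\star$ is $A^*$ (conjugate transpose) if $\star=*$ and $A^T$ if $\star=T$; for $\lambda\in\mathbb{C}$, $\lambda^\star=\overline{\lambda}$ if $\star=*$ and $\lambda^\star=\lambda$ if $\star=T$. An eigenpair $(\lambda_0,x_0)$ of $Q$ means $x_0\neq0$ and $(\lambda_0^2M+\lambda_0D+K)x_0=0$. *)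

theory Defs
  imports "Jordan_Normal_Form.Matrix" "Jordan_Normal_Form.Conjugate"
begin

datatype star = Adj | Tr

definition star_mat :: "star \<Rightarrow> 'a::conjugatable_field mat \<Rightarrow> 'a mat" where
  "star_mat s A = (if s = Adj then transpose_mat (map_mat conjugate A) else transpose_mat A)"

definition star_vec :: "star \<Rightarrow> 'a::conjugatable_field vec \<Rightarrow> 'a vec" where
  "star_vec s x = (if s = Adj then map_vec conjugate x else x)"

definition star_sc :: "star \<Rightarrow> 'a::conjugatable_field \<Rightarrow> 'a" where
  "star_sc s c = (if s = Adj then conjugate c else c)"

definition quad_eval :: "'a::field mat \<Rightarrow> 'a mat \<Rightarrow> 'a mat \<Rightarrow> 'a \<Rightarrow> 'a mat" where
  "quad_eval M D K lam = lam^2 \<cdot>\<^sub>m M + lam \<cdot>\<^sub>m D + K"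

definition quad_eigenpair :: "'a::field mat \<Rightarrow> 'a mat \<Rightarrow> 'a mat \<Rightarrow> 'a \<Rightarrow> 'a vec \<Rightarrow> bool" where
  "quad_eigenpair M D K lam x \<longleftrightarrow>
     x \<noteq> 0\<^sub>v (dim_vec x) \<and> quad_eval M D K lam *\<^sub>v x = 0\<^sub>v (dim_row M)"

end

theory Submission
  imports Defs
begin

text \<open>Write \<open>a, d, k\<close> for \<open>x\<^sub>1\<^sup>\<star> M x\<^sub>2\<close>, \<open>x\<^sub>1\<^sup>\<star> D x\<^sub>2\<close>, \<open>x\<^sub>1\<^sup>\<star> K x\<^sub>2\<close>
  and \<open>\<mu> = \<lambda>\<^sub>1\<^sup>\<star>\<close>. Since \<open>(y\<^sup>\<star> A z)\<^sup>\<star> = z\<^sup>\<star> A\<^sup>\<star> y\<close>, applying \<open>\<star>\<close> to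
  \<open>x\<^sub>2\<^sup>\<star> Q(\<lambda>\<^sub>1) x\<^sub>1 = 0\<close> and using the (skew-)symmetry of \<open>M, D, K\<close> gives
  \<open>\<epsilon>\<^sub>1 (\<mu>\<^sup>2 a + \<epsilon>\<^sub>1\<epsilon>\<^sub>2 \<mu> d + k) = 0\<close>, while \<open>x\<^sub>1\<^sup>\<star> Q(\<lambda>\<^sub>2) x\<^sub>2 = 0\<close> gives
  \<open>\<lambda>\<^sub>2\<^sup>2 a + \<lambda>\<^sub>2 d + k = 0\<close>. So \<open>\<lambda>\<^sub>2\<close> and \<open>\<epsilon>\<^sub>1\<epsilon>\<^sub>2\<mu>\<close> are distinct roots of
  \<open>t\<^sup>2 a + t d + k\<close>; subtracting the two equations and cancelling their difference
  leaves \<open>(\<lambda>\<^sub>2 + \<epsilon>\<^sub>1\<epsilon>\<^sub>2\<mu>) a + d = 0\<close>.\<close>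

lemma map_vec_conjugate: "map_vec conjugate v = conjugate v"
  by (simp add: conjugate_vec_def map_vec_def)

lemma conjugate_mult_mat_vec:
  fixes A :: "'a :: conjugatable_ring mat"
  assumes "A \<in> carrier_mat nr nc" "x \<in> carrier_vec nc"
  shows "conjugate (A *\<^sub>v x) = map_mat conjugate A *\<^sub>v conjugate x"
proof (rule eq_vecI)
  fix i assume "i < dim_vec (map_mat conjugate A *\<^sub>v conjugate x)"
  then have i: "i < nr" using assms(1) by simp
  have "conjugate (row A i) = row (map_mat conjugate A) i"
    using i assms(1) by (intro eq_vecI) auto
  then show "conjugate (A *\<^sub>v x) $ i = (map_mat conjugate A *\<^sub>v conjugate x) $ i"
    using i assms by (simp add: conjugate_sprod_vec[of _ nc])
qed (use assms in simp)

lemma smult_mat_mult_mat_vec: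
  assumes "A \<in> carrier_mat nr nc" "v \<in> carrier_vec nc"
  shows "(k \<cdot>\<^sub>m A) *\<^sub>v v = (k :: 'a :: comm_semiring_0) \<cdot>\<^sub>v (A *\<^sub>v v)"
  using assms by (intro eq_vecI) (auto simp: scalar_prod_def sum_distrib_left ac_simps)

lemma star_sc_add: "star_sc s (a + b) = star_sc s a + star_sc s (b :: 'a :: conjugatable_field)"
  by (simp add: star_sc_def conjugate_dist_add)

lemma star_sc_mult: "star_sc s (a * b) = star_sc s a * star_sc s (b :: 'a :: conjugatable_field)"
  by (simp add: star_sc_def conjugate_dist_mul)

lemma star_sc_zero [simp]: "star_sc s (0 :: 'a :: conjugatable_field) = 0"
  by (simp add: star_sc_def)

lemma star_vec_carrier [simp]: "star_vec s x \<in> carrier_vec n \<longleftrightarrow> x \<in> carrier_vec n"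
  by (simp add: star_vec_def)

lemma scalar_prod_star_mat:
  fixes A :: "'a :: conjugatable_field mat"
  assumes A: "A \<in> carrier_mat nr nc" and x: "x \<in> carrier_vec nc" and z: "z \<in> carrier_vec nr"
  shows "star_vec s x \<bullet> (star_mat s A *\<^sub>v z) = star_sc s (star_vec s z \<bullet> (A *\<^sub>v x))"
proof -
  have transpose_swap: "y \<bullet> (transpose_mat B *\<^sub>v z) = z \<bullet> (B *\<^sub>v y)"
    if "B \<in> carrier_mat nr nc" "y \<in> carrier_vec nc" for B and y :: "'a vec"
    using that z by (metis comm_scalar_prod mult_mat_vec_carrier transpose_carrier_mat
        transpose_vec_mult_scalar)
  show ?thesis
  proof (cases s)
    case Adj
    have "conjugate (conjugate z \<bullet> (A *\<^sub>v x)) = z \<bullet> (map_mat conjugate A *\<^sub>v conjugate x)"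
      using A x z by (simp add: conjugate_sprod_vec[of _ nr] conjugate_mult_mat_vec)
    then show ?thesis
      using Adj A x by (simp add: star_vec_def star_mat_def star_sc_def map_vec_conjugate transpose_swap)
  next
    case Tr
    then show ?thesis using A x by (simp add: star_vec_def star_mat_def star_sc_def transpose_swap)
  qed
qed

lemma star_sc_scalar_prod_if_star_mat_eq:
  fixes X :: "'a :: conjugatable_field mat"
  assumes "X \<in> carrier_mat n n" "star_mat s X = e \<cdot>\<^sub>m X"
    and "x \<in> carrier_vec n" "z \<in> carrier_vec n"
  shows "star_sc s (star_vec s z \<bullet> (X *\<^sub>v x)) = e * (star_vec s x \<bullet> (X *\<^sub>v z))"
  using scalar_prod_star_mat[of X n n x z s] assms
  by (simp add: smult_mat_mult_mat_vec)

lemma scalar_prod_quad_eval: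
  fixes M D K :: "'a :: field mat"
  assumes "M \<in> carrier_mat n n" "D \<in> carrier_mat n n" "K \<in> carrier_mat n n"
    and "x \<in> carrier_vec n" "y \<in> carrier_vec n"
  shows "y \<bullet> (quad_eval M D K lam *\<^sub>v x)
           = lam\<^sup>2 * (y \<bullet> (M *\<^sub>v x)) + lam * (y \<bullet> (D *\<^sub>v x)) + y \<bullet> (K *\<^sub>v x)"
  using assms
  by (simp add: quad_eval_def add_mult_distrib_mat_vec[of _ n n] scalar_prod_add_distrib[of _ n]
      smult_mat_mult_mat_vec)

lemma quad_eigenpair_scalar_prod:
  fixes M D K :: "'a :: field mat"
  assumes "M \<in> carrier_mat n n" "D \<in> carrier_mat n n" "K \<in> carrier_mat n n"
    and "quad_eigenpair M D K lam x" "x \<in> carrier_vec n" "y \<in> carrier_vec n"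
  shows "lam\<^sup>2 * (y \<bullet> (M *\<^sub>v x)) + lam * (y \<bullet> (D *\<^sub>v x)) + y \<bullet> (K *\<^sub>v x) = 0"
  using assms by (simp add: scalar_prod_quad_eval[symmetric] quad_eigenpair_def)

lemma quadratic_distinct_roots_sum:
  fixes a d k l r :: "'a :: field"
  assumes "l\<^sup>2 * a + l * d + k = 0" "r\<^sup>2 * a + r * d + k = 0" "l \<noteq> r"
  shows "l * a + r * a + d = 0"
proof -
  have "(l - r) * (l * a + r * a + d) = (l\<^sup>2 * a + l * d + k) - (r\<^sup>2 * a + r * d + k)"
    by (simp add: algebra_simps power2_eq_square)
  then show ?thesis using assms by simp
qed

theorem corollary2p5:
  fixes M D K :: "'a::conjugatable_field mat"
    and s :: star and e1 e2 :: 'a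
    and lam1 lam2 :: 'a and x1 x2 :: "'a vec" and n :: nat
  assumes "M \<in> carrier_mat n n" "D \<in> carrier_mat n n" "K \<in> carrier_mat n n"
    and "e1 \<in> {1, -1}" "e2 \<in> {1, -1}"
    and "star_mat s M = e1 \<cdot>\<^sub>m M" "star_mat s D = e2 \<cdot>\<^sub>m D" "star_mat s K = e1 \<cdot>\<^sub>m K"
    and "x1 \<in> carrier_vec n" "x2 \<in> carrier_vec n"
    and "quad_eigenpair M D K lam1 x1" "quad_eigenpair M D K lam2 x2"
    and "lam2 \<noteq> e1 * e2 * star_sc s lam1"
  shows "lam2 * (star_vec s x1 \<bullet> (M *\<^sub>v x2))
           + e1 * e2 * star_sc s lam1 * (star_vec s x1 \<bullet> (M *\<^sub>v x2))
           + star_vec s x1 \<bullet> (D *\<^sub>v x2) = 0"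
proof -
  note MDK = assms(1-3)
  define a where "a = star_vec s x1 \<bullet> (M *\<^sub>v x2)"
  define d where "d = star_vec s x1 \<bullet> (D *\<^sub>v x2)"
  define k where "k = star_vec s x1 \<bullet> (K *\<^sub>v x2)"
  define mu where "mu = star_sc s lam1"
  have root2: "lam2\<^sup>2 * a + lam2 * d + k = 0"
    using quad_eigenpair_scalar_prod[OF MDK assms(12,10), of "star_vec s x1"] assms(9)
    by (simp add: a_def d_def k_def)
  have "lam1\<^sup>2 * (star_vec s x2 \<bullet> (M *\<^sub>v x1)) + lam1 * (star_vec s x2 \<bullet> (D *\<^sub>v x1))
        + star_vec s x2 \<bullet> (K *\<^sub>v x1) = 0"
    using quad_eigenpair_scalar_prod[OF MDK assms(11,9), of "star_vec s x2"] assms(10) by simp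
  then have "star_sc s (lam1\<^sup>2 * (star_vec s x2 \<bullet> (M *\<^sub>v x1)) + lam1 * (star_vec s x2 \<bullet> (D *\<^sub>v x1))
        + star_vec s x2 \<bullet> (K *\<^sub>v x1)) = 0"
    by simp
  then have "e1 * mu\<^sup>2 * a + e2 * mu * d + e1 * k = 0"
    using star_sc_scalar_prod_if_star_mat_eq[of _ n s _ x1 x2] MDK assms(6-10)
    by (simp add: star_sc_add star_sc_mult power2_eq_square mu_def a_def d_def k_def ac_simps)
  then have "e1 * (e1 * mu\<^sup>2 * a + e2 * mu * d + e1 * k) = 0"
    by simp
  then have root1: "(e1 * e2 * mu)\<^sup>2 * a + (e1 * e2 * mu) * d + k = 0"
    using assms(4,5) by (auto simp: algebra_simps power2_eq_square)
  show ?thesis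
    using quadratic_distinct_roots_sum[OF root2 root1] assms(13)
    by (simp add: a_def d_def mu_def)
qed

end
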